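(* Let $I=(N,O,\succsim)$ be a general instance, $p$ a generalized random matching and $p'$ its associated random matching for the associated instance $I'$. Then $p$ is robust ex-post weakly stable if and only if $p'$ is robust ex-post weakly stable and $p$ is non-wasteful (i.e., $p'$ respects non-wastefulness).
   Context: General instance: $N=\{1,\dots,n\}$ agents, $O=\{o_1,\dots,o_m\}$ objects ($m,n\ge1$ arbitrary), $\emptyset$ the null object; each agent $i$ has a weak order $\succsim_i$ over $O\cup\{\emptyset\}$, each object $o$ a weak order $\succsim_o$ over $N\cup\{\emptyset\}$, with either $o\succ_i\emptyset$ or $\emptyset\succ_i o$, and either $i\succ_o\emptyset$ or $\emptyset\succ_o i$. $(i,o)$ is acceptable if $o\succ_i\emptyset$ and $i\succ_o\emptyset$. A generalized random matching is an $n\times m$ nonnegative matrix with row and column sums $\le1$; deterministic if entries are in $\{0,1\}$. $p$ is individually rational if $p(i,o)=0$ whenever $\emptyset\succ_i o$ or $\emptyset\succ_o i$; non-wasteful if there is no acceptable $(i,o)$ with $\sum_{o':o'\succsim_i o}p(i,o')<1$ and $\sum_j p(j,o)<1$. A generalized deterministic matching is weakly stable if it is individually rational and there is no acceptable $(i,o)$ with $\sum_{o':o'\succsim_i o}p(i,o')=0$ and $\sum_{j:j\succsim_o i}p(j,o)=0$. A decomposition of $p$ is $p=\sum_j\lambda_jP_j$ with $P_j$ generalized deterministic matchings, $\lambda_j\in(0,1]$, $\sum\lambda_j=1$. $p$ is robust ex-post weakly stable if it is non-wasteful and every decomposition of $p$ consists only of weakly stable generalized deterministic matchings. Associated instance: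 $D=\{d_1,\dots,d_m\}$, $\Phi=\{\phi_1,\dots,\phi_n\}$, $N'=N\cup D$, $O'=O\cup\Phi$, with weak orders (blocks best to worst, consecutive blocks strict): $i\in N$: objects acceptable to $i$ by $\succsim_i$, $\phi_i$, $\phi_k$ ($k\ne i$) in increasing index, objects unacceptable to $i$ by $\succsim_i$; $o_j$: agents acceptable to $o_j$ by $\succsim_{o_j}$, $d_j$, $d_k$ ($k\ne j$) in increasing index, agents unacceptable to $o_j$ by $\succsim_{o_j}$; $d_j$: $o_j$, other objects of $O$ in increasing index, then null objects with $\phi_k\succsim'_{d_j}\phi_l$ iff $k\succsim_{o_j}l$; $\phi_i$: $i$, other agents of $N$ in increasing index, then dummies with $d_k\succsim'_{\phi_i}d_l$ iff $o_k\succsim_i o_l$. Associated random matching: $p'(i,o_j)=p(i,o_j)$, $p'(d_j,\phi_i)=p(i,o_j)$, $p'(i,\phi_i)=1-\sum_o p(i,o)$, $p'(d_j,o_j)=1-\sum_i p(i,o_j)$, other entries $0$. For $I'$: a deterministic matching $q$ (bistochastic $\{0,1\}$-matrix) is weakly stable if there are no $a,b\in N'$, $c,c'\in O'$ with $q(a,c')=1$, $q(b,c)=1$, $c\succ'_a c'$, $a\succ'_c b$; a random matching (bistochastic matrix) is robust ex-post weakly stable if every representation of it as a convex combination with positive weights of deterministic matchings uses only weakly stable ones. *)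

theory Defs
  imports Complex_Main
begin

(* Agents of N are 0..<n, objects of O are 0..<m (index order preserved).
   The null object / null agent is None. pA i x y means x \<succeq>_i y (x,y :: nat option),
   pO j x y means x \<succeq>_{o_j} y. *)

definition sp :: "('a \<Rightarrow> 'a \<Rightarrow> bool) \<Rightarrow> 'a \<Rightarrow> 'a \<Rightarrow> bool" where
  "sp R x y \<longleftrightarrow> R x y \<and> \<not> R y x"

definition weak_order_on :: "'a set \<Rightarrow> ('a \<Rightarrow> 'a \<Rightarrow> bool) \<Rightarrow> bool" where
  "weak_order_on A R \<longleftrightarrow> (\<forall>x\<in>A. \<forall>y\<in>A. R x y \<or> R y x) \<and>
     (\<forall>x\<in>A. \<forall>y\<in>A. \<forall>z\<in>A. R x y \<longrightarrow> R y z \<longrightarrow> R x z)"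

definition general_instance ::
  "nat \<Rightarrow> nat \<Rightarrow> (nat \<Rightarrow> nat option \<Rightarrow> nat option \<Rightarrow> bool)
       \<Rightarrow> (nat \<Rightarrow> nat option \<Rightarrow> nat option \<Rightarrow> bool) \<Rightarrow> bool" where
  "general_instance n m pA pO \<longleftrightarrow> n \<ge> 1 \<and> m \<ge> 1 \<and>
     (\<forall>i<n. weak_order_on (insert None (Some ` {..<m})) (pA i) \<and>
        (\<forall>j<m. sp (pA i) (Some j) None \<or> sp (pA i) None (Some j))) \<and>
     (\<forall>j<m. weak_order_on (insert None (Some ` {..<n})) (pO j) \<and>
        (\<forall>i<n. sp (pO j) (Some i) None \<or> sp (pO j) None (Some i)))"

definition acceptable where
  "acceptable pA pO i j \<longleftrightarrow> sp (pA i) (Some j) None \<and> sp (pO j) (Some i) None"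

definition gen_random_matching :: "nat \<Rightarrow> nat \<Rightarrow> (nat \<Rightarrow> nat \<Rightarrow> real) \<Rightarrow> bool" where
  "gen_random_matching n m p \<longleftrightarrow>
     (\<forall>i<n. \<forall>j<m. p i j \<ge> 0) \<and>
     (\<forall>i<n. (\<Sum>j<m. p i j) \<le> 1) \<and>
     (\<forall>j<m. (\<Sum>i<n. p i j) \<le> 1)"

definition gen_deterministic :: "nat \<Rightarrow> nat \<Rightarrow> (nat \<Rightarrow> nat \<Rightarrow> real) \<Rightarrow> bool" where
  "gen_deterministic n m P \<longleftrightarrow> gen_random_matching n m P \<and>
     (\<forall>i<n. \<forall>j<m. P i j \<in> {0, 1})"

definition individually_rational where
  "individually_rational n m pA pO p \<longleftrightarrow>
     (\<forall>i<n. \<forall>j<m. (sp (pA i) None (Some j) \<or> sp (pO j) None (Some i)) \<longrightarrow> p i j = 0)"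

definition non_wasteful where
  "non_wasteful n m pA pO p \<longleftrightarrow>
     \<not> (\<exists>i<n. \<exists>j<m. acceptable pA pO i j \<and>
          (\<Sum>j' | j' < m \<and> pA i (Some j') (Some j). p i j') < 1 \<and>
          (\<Sum>i'<n. p i' j) < 1)"

definition gen_weakly_stable where
  "gen_weakly_stable n m pA pO P \<longleftrightarrow> individually_rational n m pA pO P \<and>
     \<not> (\<exists>i<n. \<exists>j<m. acceptable pA pO i j \<and>
          (\<Sum>j' | j' < m \<and> pA i (Some j') (Some j). P i j') = 0 \<and>
          (\<Sum>i' | i' < n \<and> pO j (Some i') (Some i). P i' j) = 0)"

definition gen_decomposition ::
  "nat \<Rightarrow> nat \<Rightarrow> (nat \<Rightarrow> nat \<Rightarrow> real) \<Rightarrow> nat \<Rightarrow> (nat \<Rightarrow> real)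
     \<Rightarrow> (nat \<Rightarrow> nat \<Rightarrow> nat \<Rightarrow> real) \<Rightarrow> bool" where
  "gen_decomposition n m p K lam Q \<longleftrightarrow>
     (\<forall>k<K. 0 < lam k \<and> lam k \<le> 1 \<and> gen_deterministic n m (Q k)) \<and>
     (\<Sum>k<K. lam k) = 1 \<and>
     (\<forall>i<n. \<forall>j<m. p i j = (\<Sum>k<K. lam k * Q k i j))"

definition gen_robust_ex_post_ws where
  "gen_robust_ex_post_ws n m pA pO p \<longleftrightarrow> non_wasteful n m pA pO p \<and>
     (\<forall>K lam Q. gen_decomposition n m p K lam Q \<longrightarrow>
        (\<forall>k<K. gen_weakly_stable n m pA pO (Q k)))"

(* Agents of N': Inl i = agent i (i<n), Inr j = dummy d_j (j<m).
   Objects of O': Inl j = object o_j (j<m), Inr i = null object phi_i (i<n). *)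

definition agents' :: "nat \<Rightarrow> nat \<Rightarrow> (nat + nat) set" where
  "agents' n m = Inl ` {..<n} \<union> Inr ` {..<m}"

definition objects' :: "nat \<Rightarrow> nat \<Rightarrow> (nat + nat) set" where
  "objects' n m = Inl ` {..<m} \<union> Inr ` {..<n}"

definition rank_rel :: "('a \<Rightarrow> nat) \<Rightarrow> ('a \<Rightarrow> 'a \<Rightarrow> bool) \<Rightarrow> 'a \<Rightarrow> 'a \<Rightarrow> bool" where
  "rank_rel rk tie x y \<longleftrightarrow> rk x < rk y \<or> (rk x = rk y \<and> tie x y)"

(* assocA n m pA pO a c c' : c \<succeq>'_a c' *)
definition assocA ::
  "nat \<Rightarrow> nat \<Rightarrow> (nat \<Rightarrow> nat option \<Rightarrow> nat option \<Rightarrow> bool)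
     \<Rightarrow> (nat \<Rightarrow> nat option \<Rightarrow> nat option \<Rightarrow> bool)
     \<Rightarrow> nat + nat \<Rightarrow> nat + nat \<Rightarrow> nat + nat \<Rightarrow> bool" where
  "assocA n m pA pO a = (case a of
      Inl i \<Rightarrow> rank_rel
        (\<lambda>c. case c of Inl j \<Rightarrow> (if sp (pA i) (Some j) None then 0 else n + 2)
                     | Inr k \<Rightarrow> (if k = i then 1 else k + 2))
        (\<lambda>c c'. case (c, c') of (Inl j, Inl j') \<Rightarrow> pA i (Some j) (Some j') | _ \<Rightarrow> True)
    | Inr j \<Rightarrow> rank_rel
        (\<lambda>c. case c of Inl j' \<Rightarrow> (if j' = j then 0 else j' + 1)
                     | Inr k \<Rightarrow> m + 1)
        (\<lambda>c c'. case (c, c') of (Inr k, Inr l) \<Rightarrow> pO j (Some k) (Some l) | _ \<Rightarrow> True))"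

(* assocO n m pA pO c a a' : a \<succeq>'_c a' *)
definition assocO ::
  "nat \<Rightarrow> nat \<Rightarrow> (nat \<Rightarrow> nat option \<Rightarrow> nat option \<Rightarrow> bool)
     \<Rightarrow> (nat \<Rightarrow> nat option \<Rightarrow> nat option \<Rightarrow> bool)
     \<Rightarrow> nat + nat \<Rightarrow> nat + nat \<Rightarrow> nat + nat \<Rightarrow> bool" where
  "assocO n m pA pO c = (case c of
      Inl j \<Rightarrow> rank_rel
        (\<lambda>a. case a of Inl i \<Rightarrow> (if sp (pO j) (Some i) None then 0 else m + 2)
                     | Inr k \<Rightarrow> (if k = j then 1 else k + 2))
        (\<lambda>a a'. case (a, a') of (Inl i, Inl i') \<Rightarrow> pO j (Some i) (Some i') | _ \<Rightarrow> True)
    | Inr i \<Rightarrow> rank_rel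
        (\<lambda>a. case a of Inl i' \<Rightarrow> (if i' = i then 0 else i' + 1)
                     | Inr k \<Rightarrow> n + 1)
        (\<lambda>a a'. case (a, a') of (Inr k, Inr l) \<Rightarrow> pA i (Some k) (Some l) | _ \<Rightarrow> True))"

definition assoc_matching :: "nat \<Rightarrow> nat \<Rightarrow> (nat \<Rightarrow> nat \<Rightarrow> real) \<Rightarrow> nat + nat \<Rightarrow> nat + nat \<Rightarrow> real" where
  "assoc_matching n m p a c = (case (a, c) of
      (Inl i, Inl j) \<Rightarrow> p i j
    | (Inr j, Inr i) \<Rightarrow> p i j
    | (Inl i, Inr k) \<Rightarrow> (if k = i then 1 - (\<Sum>j<m. p i j) else 0)
    | (Inr j, Inl k) \<Rightarrow> (if k = j then 1 - (\<Sum>i<n. p i j) else 0))"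

definition bistochastic :: "'a set \<Rightarrow> 'b set \<Rightarrow> ('a \<Rightarrow> 'b \<Rightarrow> real) \<Rightarrow> bool" where
  "bistochastic A B q \<longleftrightarrow> (\<forall>a\<in>A. \<forall>c\<in>B. q a c \<ge> 0) \<and>
     (\<forall>a\<in>A. (\<Sum>c\<in>B. q a c) = 1) \<and> (\<forall>c\<in>B. (\<Sum>a\<in>A. q a c) = 1)"

definition deterministic_matching :: "'a set \<Rightarrow> 'b set \<Rightarrow> ('a \<Rightarrow> 'b \<Rightarrow> real) \<Rightarrow> bool" where
  "deterministic_matching A B q \<longleftrightarrow> bistochastic A B q \<and> (\<forall>a\<in>A. \<forall>c\<in>B. q a c \<in> {0, 1})"

definition weakly_stable :: "'a set \<Rightarrow> 'b set \<Rightarrow> ('a \<Rightarrow> 'b \<Rightarrow> 'b \<Rightarrow> bool)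
     \<Rightarrow> ('b \<Rightarrow> 'a \<Rightarrow> 'a \<Rightarrow> bool) \<Rightarrow> ('a \<Rightarrow> 'b \<Rightarrow> real) \<Rightarrow> bool" where
  "weakly_stable A B RA RO q \<longleftrightarrow>
     \<not> (\<exists>a\<in>A. \<exists>b\<in>A. \<exists>c\<in>B. \<exists>c'\<in>B. q a c' = 1 \<and> q b c = 1 \<and>
            sp (RA a) c c' \<and> sp (RO c) a b)"

definition robust_ex_post_ws :: "'a set \<Rightarrow> 'b set \<Rightarrow> ('a \<Rightarrow> 'b \<Rightarrow> 'b \<Rightarrow> bool)
     \<Rightarrow> ('b \<Rightarrow> 'a \<Rightarrow> 'a \<Rightarrow> bool) \<Rightarrow> ('a \<Rightarrow> 'b \<Rightarrow> real) \<Rightarrow> bool" where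
  "robust_ex_post_ws A B RA RO q \<longleftrightarrow>
     (\<forall>K (lam :: nat \<Rightarrow> real) Q.
        ((\<forall>k<K. 0 < lam k \<and> deterministic_matching A B (Q k)) \<and>
         (\<Sum>k<K. lam k) = 1 \<and>
         (\<forall>a\<in>A. \<forall>c\<in>B. q a c = (\<Sum>k<K. lam k * Q k a c)))
        \<longrightarrow> (\<forall>k<K. weakly_stable A B RA RO (Q k)))"

end

theory Submission
  imports Defs
begin

(*
  A deterministic matching q of the associated instance contains two generalized matchings of the
  original instance: its agent-object block, and its dummy-null block transposed ("d_j holds phi_i"
  read as "i holds o_j"). An agent ranks its own null object above unacceptable objects and foreign
  null objects, a dummy ranks every object above every null object, and dually on the object side.
  So if q has no agent on a foreign null object and no dummy on a foreign object (which holds in any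
  decomposition of p', as p' vanishes there), every blocking pair of q is an agent-object pair
  blocking the first block or a dummy-null pair blocking the second. Conversely, a generalized
  deterministic matching lifts to one of the associated instance whose two blocks are the original
  matching. Restriction and lifting commute with convex combinations, so decompositions of p and
  of p' correspond and weak stability transfers between them.
*)

lemma sp_trans_weak_order:
  assumes "weak_order_on A R" "x \<in> A" "y \<in> A" "z \<in> A" "sp R x y" "sp R y z"
  shows "sp R x z"
  using assms unfolding weak_order_on_def sp_def by blast

lemma sp_if_not_weak_order:
  assumes "weak_order_on A R" "x \<in> A" "y \<in> A" "\<not> R y x"
  shows "sp R x y"
  using assms unfolding weak_order_on_def sp_def by blast

lemma sum_01_le_1_cases:
  fixes f :: "'a \<Rightarrow> real"
  assumes "finite S" "\<forall>x\<in>S. f x \<in> {0, 1}" "sum f S \<le> 1"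
  shows "sum f S \<in> {0, 1}"
proof (cases "\<exists>x\<in>S. f x = 1")
  case True
  then obtain x where x: "x \<in> S" "f x = 1" by blast
  have "f x \<le> sum f S" using assms(1,2) x by (intro member_le_sum) auto
  then show ?thesis using assms x by auto
next
  case False
  then show ?thesis using assms(2) by (simp add: sum.neutral)
qed

lemma positive_combination_eq_0:
  fixes lam x :: "nat \<Rightarrow> real"
  assumes "\<forall>k<K. 0 < lam k \<and> 0 \<le> x k" "(\<Sum>k<K. lam k * x k) = 0" "t < K"
  shows "x t = 0"
proof -
  have "lam t * x t = 0"
    using assms by (subst (asm) sum_nonneg_eq_0_iff) auto
  then show ?thesis using assms by auto
qed

lemma affine_combination_complement:
  fixes x :: "'a \<Rightarrow> real" and X :: "nat \<Rightarrow> 'a \<Rightarrow> real"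
  assumes "(\<Sum>k<K. lam k) = 1" "\<forall>a\<in>J. x a = (\<Sum>k<K. lam k * X k a)"
  shows "1 - sum x J = (\<Sum>k<K. lam k * (1 - sum (X k) J))"
proof -
  have "sum x J = (\<Sum>k<K. lam k * sum (X k) J)"
    using assms(2) by (simp add: sum_distrib_left sum.swap[of _ J])
  then show ?thesis using assms(1) by (simp add: right_diff_distrib sum_subtractf)
qed

lemma bistochastic_row_unique:
  assumes "bistochastic A B q" "finite B" "a \<in> A" "c \<in> B" "c' \<in> B" "c' \<noteq> c" "q a c = 1"
  shows "q a c' = 0"
proof -
  have "q a c + q a c' \<le> sum (q a) B"
    using assms sum_mono2[of B "{c, c'}" "q a"] by (auto simp: bistochastic_def)
  then show ?thesis using assms by (force simp: bistochastic_def)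
qed

lemma bistochastic_col_unique:
  assumes "bistochastic A B q" "finite A" "a \<in> A" "a' \<in> A" "c \<in> B" "a' \<noteq> a" "q a c = 1"
  shows "q a' c = 0"
proof -
  have "q a c + q a' c \<le> (\<Sum>x\<in>A. q x c)"
    using assms sum_mono2[of A "{a, a'}" "\<lambda>x. q x c"] by (auto simp: bistochastic_def)
  then show ?thesis using assms by (force simp: bistochastic_def)
qed

lemma deterministic_matching_row_partner:
  assumes "deterministic_matching A B q" "a \<in> A"
  obtains c where "c \<in> B" "q a c = 1"
proof -
  have "(\<Sum>c\<in>B. q a c) = 1" using assms by (simp add: deterministic_matching_def bistochastic_def)
  then have "\<exists>c\<in>B. q a c \<noteq> 0" using sum.neutral by force
  then show ?thesis using assms that by (auto simp: deterministic_matching_def)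
qed

lemma deterministic_matching_col_partner:
  assumes "deterministic_matching A B q" "c \<in> B"
  obtains a where "a \<in> A" "q a c = 1"
proof -
  have "(\<Sum>a\<in>A. q a c) = 1" using assms by (simp add: deterministic_matching_def bistochastic_def)
  then have "\<exists>a\<in>A. q a c \<noteq> 0" using sum.neutral by force
  then show ?thesis using assms that by (auto simp: deterministic_matching_def)
qed

definition decomposition ::
  "'a set \<Rightarrow> 'b set \<Rightarrow> ('a \<Rightarrow> 'b \<Rightarrow> real) \<Rightarrow> nat \<Rightarrow> (nat \<Rightarrow> real) \<Rightarrow> (nat \<Rightarrow> 'a \<Rightarrow> 'b \<Rightarrow> real) \<Rightarrow> bool"
where
  "decomposition A B q K lam Q \<longleftrightarrow>
     (\<forall>k<K. 0 < lam k \<and> deterministic_matching A B (Q k)) \<and> (\<Sum>k<K. lam k) = 1 \<and>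
     (\<forall>a\<in>A. \<forall>c\<in>B. q a c = (\<Sum>k<K. lam k * Q k a c))"

lemma robust_ex_post_ws_iff:
  "robust_ex_post_ws A B RA RO q \<longleftrightarrow>
     (\<forall>K lam Q. decomposition A B q K lam Q \<longrightarrow> (\<forall>k<K. weakly_stable A B RA RO (Q k)))"
  unfolding robust_ex_post_ws_def decomposition_def by blast

lemma gen_weakly_stable_iff:
  fixes P :: "nat \<Rightarrow> nat \<Rightarrow> real"
  assumes "\<forall>i<n. \<forall>j<m. 0 \<le> P i j"
  shows "gen_weakly_stable n m pA pO P \<longleftrightarrow> individually_rational n m pA pO P \<and>
     \<not> (\<exists>i<n. \<exists>j<m. acceptable pA pO i j \<and>
          (\<forall>j'<m. pA i (Some j') (Some j) \<longrightarrow> P i j' = 0) \<and>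
          (\<forall>i'<n. pO j (Some i') (Some i) \<longrightarrow> P i' j = 0))"
proof -
  have "(\<Sum>j' | j' < m \<and> pA i (Some j') (Some j). P i j') = 0 \<longleftrightarrow>
          (\<forall>j'<m. pA i (Some j') (Some j) \<longrightarrow> P i j' = 0)" if "i < n" for i j
    using assms that sum_nonneg_eq_0_iff[of "{j'. j' < m \<and> pA i (Some j') (Some j)}" "P i"] by auto
  moreover have "(\<Sum>i' | i' < n \<and> pO j (Some i') (Some i). P i' j) = 0 \<longleftrightarrow>
          (\<forall>i'<n. pO j (Some i') (Some i) \<longrightarrow> P i' j = 0)" if "j < m" for i j
    using assms that sum_nonneg_eq_0_iff[of "{i'. i' < n \<and> pO j (Some i') (Some i)}" "\<lambda>i'. P i' j"]
    by auto
  ultimately show ?thesis unfolding gen_weakly_stable_def by blast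
qed

lemma general_instance_agent_order:
  "general_instance n m pA pO \<Longrightarrow> i < n \<Longrightarrow> weak_order_on (insert None (Some ` {..<m})) (pA i)"
  unfolding general_instance_def by blast

lemma general_instance_object_order:
  "general_instance n m pA pO \<Longrightarrow> j < m \<Longrightarrow> weak_order_on (insert None (Some ` {..<n})) (pO j)"
  unfolding general_instance_def by blast

lemma individually_rational_imp_acceptable:
  assumes "general_instance n m pA pO" "individually_rational n m pA pO P"
    and "i < n" "j < m" "P i j \<noteq> 0"
  shows "acceptable pA pO i j"
  using assms unfolding general_instance_def individually_rational_def acceptable_def by blast

context
  fixes n m :: nat and pA pO :: "nat \<Rightarrow> nat option \<Rightarrow> nat option \<Rightarrow> bool"
begin

lemma sum_agents': "sum g (agents' n m) = (\<Sum>i<n. g (Inl i)) + (\<Sum>j<m. g (Inr j))"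
  unfolding agents'_def by (subst sum.union_disjoint) (auto simp: sum.reindex)

lemma sum_objects': "sum g (objects' n m) = (\<Sum>j<m. g (Inl j)) + (\<Sum>i<n. g (Inr i))"
  unfolding objects'_def by (subst sum.union_disjoint) (auto simp: sum.reindex)

lemma finite_agents': "finite (agents' n m)"
  unfolding agents'_def by simp

lemma finite_objects': "finite (objects' n m)"
  unfolding objects'_def by simp

lemma agents'_cases:
  assumes "a \<in> agents' n m"
  obtains (agent) i where "a = Inl i" "i < n" | (dummy) j where "a = Inr j" "j < m"
  using assms unfolding agents'_def by blast

lemma objects'_cases:
  assumes "c \<in> objects' n m"
  obtains (object) j where "c = Inl j" "j < m" | (null) i where "c = Inr i" "i < n"
  using assms unfolding objects'_def by blast

lemma assocA_agent_sp:
  assumes "c' = Inr i \<or> (\<exists>j'. c' = Inl j' \<and> sp (pA i) (Some j') None)"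
  shows "sp (assocA n m pA pO (Inl i)) c c' \<longleftrightarrow> (\<exists>j. c = Inl j \<and> sp (pA i) (Some j) None \<and>
           (c' = Inr i \<or> (\<exists>j'. c' = Inl j' \<and> sp (pA i) (Some j) (Some j'))))"
  using assms unfolding assocA_def rank_rel_def sp_def by (cases c) (auto split: sum.splits)

lemma assocO_object_sp:
  assumes "b = Inr j \<or> (\<exists>i'. b = Inl i' \<and> sp (pO j) (Some i') None)"
  shows "sp (assocO n m pA pO (Inl j)) a b \<longleftrightarrow> (\<exists>i. a = Inl i \<and> sp (pO j) (Some i) None \<and>
           (b = Inr j \<or> (\<exists>i'. b = Inl i' \<and> sp (pO j) (Some i) (Some i'))))"
  using assms unfolding assocO_def rank_rel_def sp_def by (cases a) (auto split: sum.splits)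

lemma assocA_dummy_sp:
  assumes "c' \<in> objects' n m"
  shows "sp (assocA n m pA pO (Inr j)) (Inr i) c' \<longleftrightarrow> (\<exists>k. c' = Inr k \<and> sp (pO j) (Some i) (Some k))"
proof -
  from assms consider j' where "c' = Inl j'" "j' < m" | k where "c' = Inr k"
    unfolding objects'_def by blast
  then show ?thesis by cases (auto simp: assocA_def rank_rel_def sp_def)
qed

lemma assocO_null_sp:
  assumes "b \<in> agents' n m"
  shows "sp (assocO n m pA pO (Inr i)) (Inr j) b \<longleftrightarrow> (\<exists>l. b = Inr l \<and> sp (pA i) (Some j) (Some l))"
proof -
  from assms consider i' where "b = Inl i'" "i' < n" | l where "b = Inr l"
    unfolding agents'_def by blast
  then show ?thesis by cases (auto simp: assocO_def rank_rel_def sp_def)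
qed

lemma assoc_matching_row_sum:
  assumes "a \<in> agents' n m"
  shows "(\<Sum>c\<in>objects' n m. assoc_matching n m P a c) = 1"
  using assms by (auto simp: agents'_def sum_objects' assoc_matching_def)

lemma assoc_matching_col_sum:
  assumes "c \<in> objects' n m"
  shows "(\<Sum>a\<in>agents' n m. assoc_matching n m P a c) = 1"
  using assms by (auto simp: objects'_def sum_agents' assoc_matching_def)

lemma assoc_matching_bistochastic:
  assumes "gen_random_matching n m P"
  shows "bistochastic (agents' n m) (objects' n m) (assoc_matching n m P)"
  using assms assoc_matching_row_sum assoc_matching_col_sum
  by (auto simp: bistochastic_def gen_random_matching_def agents'_def objects'_def
      assoc_matching_def)

lemma assoc_matching_deterministic:
  assumes "gen_deterministic n m P"
  shows "deterministic_matching (agents' n m) (objects' n m) (assoc_matching n m P)"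
proof -
  have P: "gen_random_matching n m P" "\<forall>i<n. \<forall>j<m. P i j \<in> {0, 1}"
    using assms by (auto simp: gen_deterministic_def)
  then have "(\<Sum>j<m. P i j) \<in> {0, 1}" if "i < n" for i
    using that by (intro sum_01_le_1_cases) (auto simp: gen_random_matching_def)
  moreover have "(\<Sum>i<n. P i j) \<in> {0, 1}" if "j < m" for j
    using P that by (intro sum_01_le_1_cases) (auto simp: gen_random_matching_def)
  ultimately have "assoc_matching n m P a c \<in> {0, 1}"
    if "a \<in> agents' n m" "c \<in> objects' n m" for a c
    using P(2) that by (auto simp: agents'_def objects'_def assoc_matching_def; meson)
  then show ?thesis
    using assoc_matching_bistochastic[OF P(1)] by (simp add: deterministic_matching_def)
qed

lemma assoc_matching_decomposition:
  assumes "gen_decomposition n m p K lam Q"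
  shows "decomposition (agents' n m) (objects' n m) (assoc_matching n m p) K lam
           (\<lambda>k. assoc_matching n m (Q k))"
proof -
  have lam: "(\<Sum>k<K. lam k) = 1" and p: "\<forall>i<n. \<forall>j<m. p i j = (\<Sum>k<K. lam k * Q k i j)"
    using assms by (auto simp: gen_decomposition_def)
  have "1 - (\<Sum>j<m. p i j) = (\<Sum>k<K. lam k * (1 - (\<Sum>j<m. Q k i j)))" if "i < n" for i
    using p that by (intro affine_combination_complement[OF lam]) auto
  moreover have "1 - (\<Sum>i<n. p i j) = (\<Sum>k<K. lam k * (1 - (\<Sum>i<n. Q k i j)))" if "j < m" for j
    using p that by (intro affine_combination_complement[OF lam]) auto
  ultimately have "assoc_matching n m p a c = (\<Sum>k<K. lam k * assoc_matching n m (Q k) a c)"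
    if "a \<in> agents' n m" "c \<in> objects' n m" for a c
    using p that by (auto simp: agents'_def objects'_def assoc_matching_def)
  then show ?thesis
    using assms lam assoc_matching_deterministic
    by (auto simp: decomposition_def gen_decomposition_def)
qed

lemma deterministic_matching_restrict:
  assumes "deterministic_matching (agents' n m) (objects' n m) q"
  shows "gen_deterministic n m (\<lambda>i j. q (Inl i) (Inl j))"
    and "gen_deterministic n m (\<lambda>i j. q (Inr j) (Inr i))"
proof -
  have q: "bistochastic (agents' n m) (objects' n m) q"
    and q01: "\<forall>a\<in>agents' n m. \<forall>c\<in>objects' n m. q a c \<in> {0, 1}"
    using assms by (auto simp: deterministic_matching_def)
  have nonneg: "0 \<le> q a c" if "a \<in> agents' n m" "c \<in> objects' n m" for a c
    using q that by (simp add: bistochastic_def)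
  have "(\<Sum>j<m. q a (Inl j)) \<le> 1 \<and> (\<Sum>i<n. q a (Inr i)) \<le> 1" if a: "a \<in> agents' n m" for a
  proof -
    have "(\<Sum>j<m. q a (Inl j)) + (\<Sum>i<n. q a (Inr i)) = 1"
      using q a by (simp add: bistochastic_def sum_objects')
    moreover have "0 \<le> (\<Sum>j<m. q a (Inl j))" "0 \<le> (\<Sum>i<n. q a (Inr i))"
      using nonneg[OF a] by (auto intro!: sum_nonneg simp: objects'_def)
    ultimately show ?thesis by linarith
  qed
  moreover have "(\<Sum>i<n. q (Inl i) c) \<le> 1 \<and> (\<Sum>j<m. q (Inr j) c) \<le> 1" if c: "c \<in> objects' n m" for c
  proof -
    have "(\<Sum>i<n. q (Inl i) c) + (\<Sum>j<m. q (Inr j) c) = 1"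
      using q c by (simp add: bistochastic_def sum_agents')
    moreover have "0 \<le> (\<Sum>i<n. q (Inl i) c)" "0 \<le> (\<Sum>j<m. q (Inr j) c)"
      using nonneg c by (auto intro!: sum_nonneg simp: agents'_def)
    ultimately show ?thesis by linarith
  qed
  ultimately show "gen_deterministic n m (\<lambda>i j. q (Inl i) (Inl j))"
    and "gen_deterministic n m (\<lambda>i j. q (Inr j) (Inr i))"
    using q01 nonneg
    by (auto simp: gen_deterministic_def gen_random_matching_def agents'_def objects'_def)
qed

lemma decomposition_restrict:
  assumes "decomposition (agents' n m) (objects' n m) (assoc_matching n m p) K lam Q"
  shows "gen_decomposition n m p K lam (\<lambda>k i j. Q k (Inl i) (Inl j))"
    and "gen_decomposition n m p K lam (\<lambda>k i j. Q k (Inr j) (Inr i))"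
proof -
  have lam: "\<forall>k<K. 0 < lam k" "(\<Sum>k<K. lam k) = 1"
    and Q: "\<forall>k<K. deterministic_matching (agents' n m) (objects' n m) (Q k)"
    and p: "\<forall>a\<in>agents' n m. \<forall>c\<in>objects' n m. assoc_matching n m p a c = (\<Sum>k<K. lam k * Q k a c)"
    using assms by (auto simp: decomposition_def)
  have "lam k \<le> 1" if "k < K" for k
  proof -
    have "lam k \<le> (\<Sum>k<K. lam k)"
      using lam that by (intro member_le_sum) (auto simp: less_imp_le)
    then show ?thesis using lam by simp
  qed
  moreover have "p i j = (\<Sum>k<K. lam k * Q k (Inl i) (Inl j))"
    and "p i j = (\<Sum>k<K. lam k * Q k (Inr j) (Inr i))" if "i < n" "j < m" for i j
    using p[rule_format, of "Inl i" "Inl j"] p[rule_format, of "Inr j" "Inr i"] that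
    by (auto simp: agents'_def objects'_def assoc_matching_def)
  ultimately show "gen_decomposition n m p K lam (\<lambda>k i j. Q k (Inl i) (Inl j))"
    and "gen_decomposition n m p K lam (\<lambda>k i j. Q k (Inr j) (Inr i))"
    using lam Q deterministic_matching_restrict by (auto simp: gen_decomposition_def)
qed

lemma decomposition_off_diagonal:
  assumes "decomposition (agents' n m) (objects' n m) (assoc_matching n m p) K lam Q" "t < K"
  shows "\<forall>i<n. \<forall>k<n. k \<noteq> i \<longrightarrow> Q t (Inl i) (Inr k) = 0"
    and "\<forall>j<m. \<forall>k<m. k \<noteq> j \<longrightarrow> Q t (Inr j) (Inl k) = 0"
proof -
  have "Q t a c = 0" if "a \<in> agents' n m" "c \<in> objects' n m" "assoc_matching n m p a c = 0" for a c
  proof (rule positive_combination_eq_0[OF _ _ assms(2)])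
    show "\<forall>k<K. 0 < lam k \<and> 0 \<le> Q k a c"
      using assms(1) that
      by (auto simp: decomposition_def deterministic_matching_def bistochastic_def)
    show "(\<Sum>k<K. lam k * Q k a c) = 0"
      using assms(1) that by (auto simp: decomposition_def)
  qed
  then show "\<forall>i<n. \<forall>k<n. k \<noteq> i \<longrightarrow> Q t (Inl i) (Inr k) = 0"
    and "\<forall>j<m. \<forall>k<m. k \<noteq> j \<longrightarrow> Q t (Inr j) (Inl k) = 0"
    by (auto simp: agents'_def objects'_def assoc_matching_def)
qed

lemma assoc_agent_envy:
  assumes gi: "general_instance n m pA pO"
    and q: "deterministic_matching (agents' n m) (objects' n m) q"
    and ir: "individually_rational n m pA pO (\<lambda>i j. q (Inl i) (Inl j))"
    and off: "\<forall>k<n. k \<noteq> i \<longrightarrow> q (Inl i) (Inr k) = 0"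
    and i: "i < n" and c': "c' \<in> objects' n m" "q (Inl i) c' = 1"
    and envy: "sp (assocA n m pA pO (Inl i)) c c'"
  obtains j where "c = Inl j" "sp (pA i) (Some j) None"
    "\<forall>j'<m. pA i (Some j') (Some j) \<longrightarrow> q (Inl i) (Inl j') = 0"
proof -
  have row_unique: "q (Inl i) c'' = 0" if "c'' \<in> objects' n m" "c'' \<noteq> c'" for c''
    using bistochastic_row_unique[OF _ finite_objects', of _ q "Inl i" c' c''] q i c' that
    by (auto simp: deterministic_matching_def agents'_def)
  from c' off consider (object) j' where "c' = Inl j'" "j' < m" | (null) "c' = Inr i"
    unfolding objects'_def by force
  then show ?thesis
  proof cases
    case object
    have "acceptable pA pO i j'"
      using individually_rational_imp_acceptable[OF gi ir i object(2)] c' object by simp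
    then obtain j where j: "c = Inl j" "sp (pA i) (Some j) None" "sp (pA i) (Some j) (Some j')"
      using envy object assocA_agent_sp by (auto simp: acceptable_def)
    then show ?thesis
      using that row_unique object by (auto simp: objects'_def sp_def)
  next
    case null
    then obtain j where "c = Inl j" "sp (pA i) (Some j) None"
      using envy assocA_agent_sp by auto
    then show ?thesis
      using that row_unique null by (auto simp: objects'_def)
  qed
qed

lemma assoc_object_envy:
  assumes gi: "general_instance n m pA pO"
    and q: "deterministic_matching (agents' n m) (objects' n m) q"
    and ir: "individually_rational n m pA pO (\<lambda>i j. q (Inl i) (Inl j))"
    and off: "\<forall>k<m. k \<noteq> j \<longrightarrow> q (Inr k) (Inl j) = 0"
    and j: "j < m" and b: "b \<in> agents' n m" "q b (Inl j) = 1"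
    and envy: "sp (assocO n m pA pO (Inl j)) a b"
  obtains i where "a = Inl i" "sp (pO j) (Some i) None"
    "\<forall>i'<n. pO j (Some i') (Some i) \<longrightarrow> q (Inl i') (Inl j) = 0"
proof -
  have col_unique: "q b' (Inl j) = 0" if "b' \<in> agents' n m" "b' \<noteq> b" for b'
    using bistochastic_col_unique[OF _ finite_agents', of _ q b b' "Inl j"] q j b that
    by (auto simp: deterministic_matching_def objects'_def)
  from b off consider (agent) i' where "b = Inl i'" "i' < n" | (dummy) "b = Inr j"
    unfolding agents'_def by force
  then show ?thesis
  proof cases
    case agent
    have "acceptable pA pO i' j"
      using individually_rational_imp_acceptable[OF gi ir agent(2) j] b agent by simp
    then obtain i where i: "a = Inl i" "sp (pO j) (Some i) None" "sp (pO j) (Some i) (Some i')"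
      using envy agent assocO_object_sp by (auto simp: acceptable_def)
    then show ?thesis
      using that col_unique agent by (auto simp: agents'_def sp_def)
  next
    case dummy
    then obtain i where "a = Inl i" "sp (pO j) (Some i) None"
      using envy assocO_object_sp by auto
    then show ?thesis
      using that col_unique dummy by (auto simp: agents'_def)
  qed
qed

lemma assoc_dummy_envy:
  assumes gi: "general_instance n m pA pO"
    and q: "deterministic_matching (agents' n m) (objects' n m) q"
    and ir: "individually_rational n m pA pO (\<lambda>i j. q (Inr j) (Inr i))"
    and i: "i < n" and j: "j < m" and c': "c' \<in> objects' n m" "q (Inr j) c' = 1"
    and envy: "sp (assocA n m pA pO (Inr j)) (Inr i) c'"
  shows "sp (pO j) (Some i) None"
    and "\<forall>i'<n. pO j (Some i') (Some i) \<longrightarrow> q (Inr j) (Inr i') = 0"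
proof -
  obtain k where k: "c' = Inr k" "k < n" "sp (pO j) (Some i) (Some k)"
    using envy assocA_dummy_sp[OF c'(1)] c'(1) by (auto simp: objects'_def)
  have "acceptable pA pO k j"
    using individually_rational_imp_acceptable[OF gi ir k(2) j] c' k by simp
  then show "sp (pO j) (Some i) None"
    using sp_trans_weak_order[OF general_instance_object_order[OF gi j]] k i
    by (auto simp: acceptable_def)
  have "q (Inr j) (Inr i') = 0" if "i' < n" "i' \<noteq> k" for i'
    using bistochastic_row_unique[OF _ finite_objects', of _ q "Inr j" c' "Inr i'"] q j k c' that
    by (auto simp: deterministic_matching_def agents'_def objects'_def)
  then show "\<forall>i'<n. pO j (Some i') (Some i) \<longrightarrow> q (Inr j) (Inr i') = 0"
    using k(3) by (auto simp: sp_def)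
qed

lemma assoc_null_envy:
  assumes gi: "general_instance n m pA pO"
    and q: "deterministic_matching (agents' n m) (objects' n m) q"
    and ir: "individually_rational n m pA pO (\<lambda>i j. q (Inr j) (Inr i))"
    and i: "i < n" and j: "j < m" and b: "b \<in> agents' n m" "q b (Inr i) = 1"
    and envy: "sp (assocO n m pA pO (Inr i)) (Inr j) b"
  shows "sp (pA i) (Some j) None"
    and "\<forall>j'<m. pA i (Some j') (Some j) \<longrightarrow> q (Inr j') (Inr i) = 0"
proof -
  obtain l where l: "b = Inr l" "l < m" "sp (pA i) (Some j) (Some l)"
    using envy assocO_null_sp[OF b(1)] b(1) by (auto simp: agents'_def)
  have "acceptable pA pO i l"
    using individually_rational_imp_acceptable[OF gi ir i l(2)] b l by simp
  then show "sp (pA i) (Some j) None"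
    using sp_trans_weak_order[OF general_instance_agent_order[OF gi i]] l j
    by (auto simp: acceptable_def)
  have "q (Inr j') (Inr i) = 0" if "j' < m" "j' \<noteq> l" for j'
    using bistochastic_col_unique[OF _ finite_agents', of _ q b "Inr j'" "Inr i"] q i l b that
    by (auto simp: deterministic_matching_def agents'_def objects'_def)
  then show "\<forall>j'<m. pA i (Some j') (Some j) \<longrightarrow> q (Inr j') (Inr i) = 0"
    using l(3) by (auto simp: sp_def)
qed

lemma weakly_stable_assoc_if_restrictions:
  assumes gi: "general_instance n m pA pO"
    and q: "deterministic_matching (agents' n m) (objects' n m) q"
    and off_agents: "\<forall>i<n. \<forall>k<n. k \<noteq> i \<longrightarrow> q (Inl i) (Inr k) = 0"
    and off_dummies: "\<forall>j<m. \<forall>k<m. k \<noteq> j \<longrightarrow> q (Inr j) (Inl k) = 0"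
    and stable_agents: "gen_weakly_stable n m pA pO (\<lambda>i j. q (Inl i) (Inl j))"
    and stable_dummies: "gen_weakly_stable n m pA pO (\<lambda>i j. q (Inr j) (Inr i))"
  shows "weakly_stable (agents' n m) (objects' n m) (assocA n m pA pO) (assocO n m pA pO) q"
  unfolding weakly_stable_def
proof (intro notI, elim bexE conjE)
  fix a b c c'
  assume a: "a \<in> agents' n m" and b: "b \<in> agents' n m"
    and c: "c \<in> objects' n m" and c': "c' \<in> objects' n m"
    and qac': "q a c' = 1" and qbc: "q b c = 1"
    and envyA: "sp (assocA n m pA pO a) c c'" and envyO: "sp (assocO n m pA pO c) a b"
  have "\<forall>i<n. \<forall>j<m. 0 \<le> q (Inl i) (Inl j)" "\<forall>i<n. \<forall>j<m. 0 \<le> q (Inr j) (Inr i)"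
    using deterministic_matching_restrict[OF q]
    by (auto simp: gen_deterministic_def gen_random_matching_def)
  note no_block_agents = stable_agents[unfolded gen_weakly_stable_iff[OF this(1)]]
   and no_block_dummies = stable_dummies[unfolded gen_weakly_stable_iff[OF this(2)]]
  have ir_agents: "individually_rational n m pA pO (\<lambda>i j. q (Inl i) (Inl j))"
    and ir_dummies: "individually_rational n m pA pO (\<lambda>i j. q (Inr j) (Inr i))"
    using stable_agents stable_dummies by (simp_all add: gen_weakly_stable_def)
  from a show False
  proof (cases rule: agents'_cases)
    case (agent i)
    then obtain j where j: "c = Inl j" "sp (pA i) (Some j) None"
        "\<forall>j'<m. pA i (Some j') (Some j) \<longrightarrow> q (Inl i) (Inl j') = 0"
      using assoc_agent_envy[OF gi q ir_agents _ agent(2) c', of c] off_agents qac' envyA by auto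
    have "j < m" using c j(1) by (auto simp: objects'_def)
    then obtain i' where "a = Inl i'" "sp (pO j) (Some i') None"
        "\<forall>i''<n. pO j (Some i'') (Some i') \<longrightarrow> q (Inl i'') (Inl j) = 0"
      using assoc_object_envy[OF gi q ir_agents _ _ b, of j a] off_dummies envyO qbc j(1) by auto
    then show False
      using no_block_agents agent j \<open>j < m\<close> unfolding acceptable_def by blast
  next
    case (dummy j)
    from c show False
    proof (cases rule: objects'_cases)
      case (object j')
      then show False
        using assoc_object_envy[OF gi q ir_agents _ object(2), of b a] off_dummies dummy b qbc envyO
        by auto
    next
      case (null i)
      then show False
        using assoc_dummy_envy[OF gi q ir_dummies null(2) dummy(2) c']
          assoc_null_envy[OF gi q ir_dummies null(2) dummy(2) b] no_block_dummies
          dummy qac' qbc envyA envyO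
        unfolding acceptable_def by blast
    qed
  qed
qed

lemma individually_rational_if_assoc_stable:
  assumes P: "gen_deterministic n m P"
    and stable: "weakly_stable (agents' n m) (objects' n m) (assocA n m pA pO) (assocO n m pA pO)
                   (assoc_matching n m P)"
  shows "individually_rational n m pA pO P"
  unfolding individually_rational_def
proof (intro allI impI)
  fix i j assume i: "i < n" and j: "j < m"
    and unacceptable: "sp (pA i) None (Some j) \<or> sp (pO j) None (Some i)"
  let ?q = "assoc_matching n m P"
  have no_block: "\<not> (?q a c' = 1 \<and> ?q b c = 1 \<and>
                     sp (assocA n m pA pO a) c c' \<and> sp (assocO n m pA pO c) a b)"
    if "a \<in> agents' n m" "b \<in> agents' n m" "c \<in> objects' n m" "c' \<in> objects' n m" for a b c c'
    using stable that unfolding weakly_stable_def by blast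
  show "P i j = 0"
  proof (rule ccontr)
    assume "P i j \<noteq> 0"
    \<comment> \<open>Then d_j holds phi_i: if o_j is unacceptable to i, then i and phi_i block;
      if i is unacceptable to o_j, then d_j and o_j block.\<close>
    then have "?q (Inl i) (Inl j) = 1" "?q (Inr j) (Inr i) = 1"
      using P i j by (auto simp: gen_deterministic_def assoc_matching_def)
    moreover have "Inl i \<in> agents' n m" "Inr j \<in> agents' n m"
      "Inl j \<in> objects' n m" "Inr i \<in> objects' n m"
      using i j by (auto simp: agents'_def objects'_def)
    ultimately show False
      using unacceptable no_block[of "Inl i" "Inr j" "Inr i" "Inl j"]
        no_block[of "Inr j" "Inl i" "Inl j" "Inr i"]
      by (auto simp: assocA_def assocO_def rank_rel_def sp_def)
  qed
qed

lemma assoc_agent_prefers_object: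
  assumes gi: "general_instance n m pA pO"
    and P: "gen_deterministic n m P" and ir: "individually_rational n m pA pO P"
    and i: "i < n" and j: "j < m" and acc: "sp (pA i) (Some j) None"
    and above_j: "\<forall>j'<m. pA i (Some j') (Some j) \<longrightarrow> P i j' = 0"
    and c': "c' \<in> objects' n m" "assoc_matching n m P (Inl i) c' = 1"
  shows "sp (assocA n m pA pO (Inl i)) (Inl j) c'"
  using c'(1)
proof (cases rule: objects'_cases)
  case (object j')
  then have "P i j' = 1" using c' by (simp add: assoc_matching_def)
  then have "acceptable pA pO i j'" "\<not> pA i (Some j') (Some j)"
    using individually_rational_imp_acceptable[OF gi ir i object(2)] above_j object by auto
  moreover from this(2) have "sp (pA i) (Some j) (Some j')"
    using sp_if_not_weak_order[OF general_instance_agent_order[OF gi i]] j object by auto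
  ultimately show ?thesis
    using assocA_agent_sp acc object by (auto simp: acceptable_def)
next
  case (null k)
  then have "k = i" using c' by (simp add: assoc_matching_def split: if_splits)
  then show ?thesis using assocA_agent_sp acc null by auto
qed

lemma assoc_object_prefers_agent:
  assumes gi: "general_instance n m pA pO"
    and P: "gen_deterministic n m P" and ir: "individually_rational n m pA pO P"
    and i: "i < n" and j: "j < m" and acc: "sp (pO j) (Some i) None"
    and above_i: "\<forall>i'<n. pO j (Some i') (Some i) \<longrightarrow> P i' j = 0"
    and b: "b \<in> agents' n m" "assoc_matching n m P b (Inl j) = 1"
  shows "sp (assocO n m pA pO (Inl j)) (Inl i) b"
  using b(1)
proof (cases rule: agents'_cases)
  case (agent i')
  then have "P i' j = 1" using b by (simp add: assoc_matching_def)
  then have "acceptable pA pO i' j" "\<not> pO j (Some i') (Some i)"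
    using individually_rational_imp_acceptable[OF gi ir agent(2) j] above_i agent by auto
  moreover from this(2) have "sp (pO j) (Some i) (Some i')"
    using sp_if_not_weak_order[OF general_instance_object_order[OF gi j]] i agent by auto
  ultimately show ?thesis
    using assocO_object_sp acc agent by (auto simp: acceptable_def)
next
  case (dummy k)
  then have "k = j" using b by (simp add: assoc_matching_def split: if_splits)
  then show ?thesis using assocO_object_sp acc dummy by auto
qed

lemma gen_weakly_stable_if_assoc:
  assumes gi: "general_instance n m pA pO"
    and P: "gen_deterministic n m P"
    and stable: "weakly_stable (agents' n m) (objects' n m) (assocA n m pA pO) (assocO n m pA pO)
                   (assoc_matching n m P)"
  shows "gen_weakly_stable n m pA pO P"
proof -
  let ?q = "assoc_matching n m P"
  have ir: "individually_rational n m pA pO P"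
    using individually_rational_if_assoc_stable[OF P stable] .
  have False
    if i: "i < n" and j: "j < m" and acc: "acceptable pA pO i j"
      and above_j: "\<forall>j'<m. pA i (Some j') (Some j) \<longrightarrow> P i j' = 0"
      and above_i: "\<forall>i'<n. pO j (Some i') (Some i) \<longrightarrow> P i' j = 0" for i j
  proof -
    have agent: "Inl i \<in> agents' n m" and object: "Inl j \<in> objects' n m"
      using i j by (auto simp: agents'_def objects'_def)
    obtain c' where c': "c' \<in> objects' n m" "?q (Inl i) c' = 1"
      using deterministic_matching_row_partner[OF assoc_matching_deterministic[OF P] agent] .
    obtain b where b: "b \<in> agents' n m" "?q b (Inl j) = 1"
      using deterministic_matching_col_partner[OF assoc_matching_deterministic[OF P] object] .
    have "sp (assocA n m pA pO (Inl i)) (Inl j) c'" "sp (assocO n m pA pO (Inl j)) (Inl i) b"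
      using assoc_agent_prefers_object[OF gi P ir i j _ above_j c']
        assoc_object_prefers_agent[OF gi P ir i j _ above_i b] acc
      by (auto simp: acceptable_def)
    then show False
      using stable agent object b c' unfolding weakly_stable_def by blast
  qed
  moreover have "\<forall>i<n. \<forall>j<m. 0 \<le> P i j"
    using P by (auto simp: gen_deterministic_def gen_random_matching_def)
  ultimately show ?thesis
    using ir gen_weakly_stable_iff by blast
qed

lemma robust_ex_post_ws_assoc_if_decompositions_stable:
  assumes gi: "general_instance n m pA pO"
    and stable: "\<forall>K lam Q. gen_decomposition n m p K lam Q \<longrightarrow>
                   (\<forall>k<K. gen_weakly_stable n m pA pO (Q k))"
  shows "robust_ex_post_ws (agents' n m) (objects' n m) (assocA n m pA pO) (assocO n m pA pO)
           (assoc_matching n m p)"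
  unfolding robust_ex_post_ws_iff
proof (intro allI impI)
  fix K lam Q t
  assume dec: "decomposition (agents' n m) (objects' n m) (assoc_matching n m p) K lam Q"
    and t: "t < K"
  have "deterministic_matching (agents' n m) (objects' n m) (Q t)"
    using dec t by (simp add: decomposition_def)
  then show "weakly_stable (agents' n m) (objects' n m) (assocA n m pA pO) (assocO n m pA pO) (Q t)"
    using weakly_stable_assoc_if_restrictions[OF gi _ decomposition_off_diagonal[OF dec t]]
      stable decomposition_restrict[OF dec] t
    by blast
qed

lemma decompositions_stable_if_robust_ex_post_ws_assoc:
  assumes gi: "general_instance n m pA pO"
    and robust: "robust_ex_post_ws (agents' n m) (objects' n m) (assocA n m pA pO)
                   (assocO n m pA pO) (assoc_matching n m p)"
    and dec: "gen_decomposition n m p K lam Q" and t: "t < K"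
  shows "gen_weakly_stable n m pA pO (Q t)"
proof (rule gen_weakly_stable_if_assoc[OF gi])
  show "gen_deterministic n m (Q t)"
    using dec t by (simp add: gen_decomposition_def)
  show "weakly_stable (agents' n m) (objects' n m) (assocA n m pA pO) (assocO n m pA pO)
          (assoc_matching n m (Q t))"
    using robust[unfolded robust_ex_post_ws_iff] assoc_matching_decomposition[OF dec] t by blast
qed

end

theorem proposition27:
  fixes n m :: nat
    and pA pO :: "nat \<Rightarrow> nat option \<Rightarrow> nat option \<Rightarrow> bool"
    and p :: "nat \<Rightarrow> nat \<Rightarrow> real"
  assumes "general_instance n m pA pO"
    and "gen_random_matching n m p"
  shows "gen_robust_ex_post_ws n m pA pO p \<longleftrightarrow>
           (robust_ex_post_ws (agents' n m) (objects' n m) (assocA n m pA pO) (assocO n m pA pO)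
              (assoc_matching n m p)
            \<and> non_wasteful n m pA pO p)"
  using robust_ex_post_ws_assoc_if_decompositions_stable[OF assms(1)]
    decompositions_stable_if_robust_ex_post_ws_assoc[OF assms(1)]
  unfolding gen_robust_ex_post_ws_def by blast

end
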